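(* Let $\lambda\in\mathbb{R}\setminus\{0\}$, $k\in\mathbb{Z}$, $u\in\mathbb{C}$ with $u\neq 1$, and $x\in\mathbb{R}$. Then for every integer $n\geq 0$, \[ FG_{n,\lambda}^{(k)}(x,u)=n\sum_{m=0}^{n-1}\frac{\binom{n-1}{m}}{m+1}\sum_{j=1}^{m+1}\frac{(1)_{j,\lambda}}{j^{k-1}}S_{1,\lambda}(m+1,j)\,FG_{n-1-m,\lambda}(x,u), \] where $FG_{l,\lambda}(x,u)$ are defined by $\frac{1-u}{e_\lambda(t)-u}e_\lambda^{x}(t)=\sum_{l\ge 0}FG_{l,\lambda}(x,u)\frac{t^l}{l!}$.
   Context: All generating functions are formal power series in $t$. For $z\in\mathbb{C}$: $(z)_{0,\lambda}=1$ and $(z)_{n,\lambda}=z(z-\lambda)(z-2\lambda)\cdots(z-(n-1)\lambda)$ for $n\ge1$. The degenerate exponential is $e_\lambda^{z}(t)=(1+\lambda t)^{z/\lambda}=\sum_{n\ge0}(z)_{n,\lambda}\frac{t^n}{n!}$, and $e_\lambda(t)=e_\lambda^{1}(t)$. Its compositional inverse is $\log_\lambda(1+t)=\frac{1}{\lambda}\big((1+t)^\lambda-1\big)$. The degenerate Stirling numbers of the first kind are defined by $\frac{1}{j!}(\log_\lambda(1+t))^j=\sum_{n\ge j}S_{1,\lambda}(n,j)\frac{t^n}{n!}$. The modified degenerate polyexponential function is $\mathrm{Ei}_{k,\lambda}(x)=\sum_{n\ge1}\frac{(1)_{n,\lambda}}{n^k(n-1)!}x^n$. The degenerate poly-Frobenius-Genocchi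 polynomials are defined by $\sum_{n\ge0}FG_{n,\lambda}^{(k)}(x,u)\frac{t^n}{n!}=\frac{(1-u)\,\mathrm{Ei}_{k,\lambda}(\log_\lambda(1+t))}{e_\lambda(t)-u}e_\lambda^{x}(t)$. *)

theory Defs
  imports Complex_Main "HOL-Computational_Algebra.Formal_Power_Series"
begin

definition dfall :: "complex \<Rightarrow> nat \<Rightarrow> real \<Rightarrow> complex" where
  "dfall z n lam = (\<Prod>i<n. z - of_nat i * complex_of_real lam)"

definition dexp :: "real \<Rightarrow> complex \<Rightarrow> complex fps" where
  "dexp lam z = Abs_fps (\<lambda>n. dfall z n lam / fact n)"

definition dlog :: "real \<Rightarrow> complex fps" where
  "dlog lam = fps_const (1 / complex_of_real lam) * (fps_binomial (complex_of_real lam) - 1)"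

definition S1 :: "real \<Rightarrow> nat \<Rightarrow> nat \<Rightarrow> complex" where
  "S1 lam n j = fact n * fps_nth (dlog lam ^ j) n / fact j"

definition Ei :: "int \<Rightarrow> real \<Rightarrow> complex fps" where
  "Ei k lam = Abs_fps (\<lambda>n. if n = 0 then 0
      else dfall 1 n lam / ((of_nat n) powi k * fact (n - 1)))"

definition FGk_gf :: "int \<Rightarrow> real \<Rightarrow> real \<Rightarrow> complex \<Rightarrow> complex fps" where
  "FGk_gf k lam x u = fps_const (1 - u) * (Ei k lam oo dlog lam)
      * inverse (dexp lam 1 - fps_const u) * dexp lam (complex_of_real x)"

definition FGk :: "int \<Rightarrow> real \<Rightarrow> real \<Rightarrow> complex \<Rightarrow> nat \<Rightarrow> complex" where
  "FGk k lam x u n = fact n * fps_nth (FGk_gf k lam x u) n"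

definition FG_gf :: "real \<Rightarrow> real \<Rightarrow> complex \<Rightarrow> complex fps" where
  "FG_gf lam x u = fps_const (1 - u) * inverse (dexp lam 1 - fps_const u) * dexp lam (complex_of_real x)"

definition FG :: "real \<Rightarrow> real \<Rightarrow> complex \<Rightarrow> nat \<Rightarrow> complex" where
  "FG lam x u n = fact n * fps_nth (FG_gf lam x u) n"

end

theory Submission
  imports Defs
begin

text \<open>The generating function of the FG^(k) is Ei_k,lambda(log_lambda(1+t)) times that of the FG.
  Expanding Ei_k,lambda(log_lambda(1+t)) in powers of log_lambda(1+t) gives its exponential
  coefficients as sums of degenerate Stirling numbers, and the identity is the coefficient of
  t^n/n! in the product of the two exponential generating functions; the first has no constant
  term, which produces the factor n/(m+1).\<close>

lemma fact_fps_mult_nth_zero_constant: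
  fixes f g :: "'a::field_char_0 fps"
  assumes "fps_nth f 0 = 0"
  shows "fact n * fps_nth (f * g) n =
    of_nat n * (\<Sum>m<n. of_nat ((n - 1) choose m) / of_nat (m + 1) *
      (fact (m + 1) * fps_nth f (m + 1)) * (fact (n - 1 - m) * fps_nth g (n - 1 - m)))"
proof -
  have coeff: "fps_nth (f * g) n = (\<Sum>m<n. fps_nth f (m + 1) * fps_nth g (n - 1 - m))"
    using assms by (cases n) (simp_all add: fps_mult_nth sum.atLeast_Suc_atMost
        sum.atLeast1_atMost_eq)
  have "fact n * (a * b) = of_nat n * (of_nat ((n - 1) choose m) / of_nat (m + 1) *
      (fact (m + 1) * a) * (fact (n - 1 - m) * b))" if "m < n" for m and a b :: 'a
  proof -
    obtain n' where n: "n = Suc n'" and "m \<le> n'"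
      using \<open>m < n\<close> by (cases n) auto
    then have "(of_nat (n' choose m) :: 'a) = fact n' / (fact m * fact (n' - m))"
      using binomial_fact by blast
    moreover have "(of_nat (m + 1) :: 'a) \<noteq> 0"
      by (metis of_nat_eq_0_iff add_is_0 one_neq_zero)
    ultimately show ?thesis
      by (simp add: n fact_Suc del: of_nat_add of_nat_Suc)
  qed
  then show ?thesis
    unfolding coeff sum_distrib_left by (intro sum.cong) auto
qed

lemma fact_fps_nth_Ei_compose_dlog:
  "fact i * fps_nth (Ei k lam oo dlog lam) i =
    (\<Sum>j=1..i. dfall 1 j lam / (of_nat j) powi (k - 1) * S1 lam i j)"
proof -
  have "fact i * (fps_nth (Ei k lam) j * fps_nth (dlog lam ^ j) i) =
      dfall 1 j lam / (of_nat j) powi (k - 1) * S1 lam i j" if "j \<ge> 1" for j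
  \<comment> \<open>The factor j! of S1 turns 1/(j^k (j-1)!) into 1/j^(k-1).\<close>
  proof -
    have j0: "(of_nat j :: complex) \<noteq> 0" using that by simp
    have "(of_nat j :: complex) powi k = of_nat j powi (k - 1) * of_nat j"
      using power_int_add[of "of_nat j :: complex" "k - 1" 1] j0 by simp
    moreover have "(fact j :: complex) = of_nat j * fact (j - 1)"
      using that by (cases j) (auto simp: fact_Suc)
    ultimately show ?thesis
      using that j0 by (simp add: Ei_def S1_def field_simps)
  qed
  moreover have "fps_nth (Ei k lam oo dlog lam) i =
      (\<Sum>j=1..i. fps_nth (Ei k lam) j * fps_nth (dlog lam ^ j) i)"
    by (simp add: fps_compose_nth sum.atLeast_Suc_atMost Ei_def)
  ultimately show ?thesis
    by (simp add: sum_distrib_left)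
qed

lemma FGk_gf_eq_Ei_compose_dlog_mult_FG_gf:
  "FGk_gf k lam x u = (Ei k lam oo dlog lam) * FG_gf lam x u"
  unfolding FGk_gf_def FG_gf_def by (simp add: algebra_simps)

theorem theorem1:
  fixes lam x :: real and k :: int and u :: complex and n :: nat
  assumes "lam \<noteq> 0" and "u \<noteq> 1"
  shows "FGk k lam x u n =
    of_nat n * (\<Sum>m<n. of_nat ((n - 1) choose m) / of_nat (m + 1) *
      (\<Sum>j=1..m+1. dfall 1 j lam / (of_nat j) powi (k - 1) * S1 lam (m + 1) j)
      * FG lam x u (n - 1 - m))"
proof -
  have "fps_nth (Ei k lam oo dlog lam) 0 = 0"
    by (simp add: Ei_def)
  then show ?thesis
    unfolding FGk_def FGk_gf_eq_Ei_compose_dlog_mult_FG_gf FG_def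
    by (simp only: fact_fps_mult_nth_zero_constant fact_fps_nth_Ei_compose_dlog)
qed

end
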